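(* Let $C$ be a parity complex. For every $x\in C$, the sets $x^+$ and $x^-$ are tight.
   Context: A parity complex consists of a set $C=\bigsqcup_{n\ge 0}C_n$ graded by dimension, together with, for each $n\ge 0$ and each $x\in C_{n+1}$, two disjoint, non-empty, finite subsets $x^-,x^+\subseteq C_n$ (for $x\in C_0$ put $x^-=x^+=\emptyset$), subject to Axioms 1, 2, 3A, 3B below. Notation: for $S\subseteq C$, $S^-=\bigcup_{w\in S}w^-$, $S^+=\bigcup_{w\in S}w^+$, $S^\pm=S^+\setminus S^-$; $x^{-+}=(x^-)^+$, etc. For $S,T\subseteq C$ write $S\perp T$ when $S^-\cap T^-=\emptyset$ and $S^+\cap T^+=\emptyset$; $x\perp y$ means $\{x\}\perp\{y\}$. With $S_n=S\cap C_n$, a set $S$ is well-formed when $S_0$ has at most one element and for every $n>0$ and all distinct $x,y\in S_n$, $x\perp y$. Write $x<y$ when $x^+\cap y^-\neq\emptyset$, and let $\lhd$ be the reflexive transitive closure of $<$. Axioms: (1) for all $x$, $x^{++}\cup x^{--}=x^{-+}\cup x^{+-}$; (2) for all $x$, $x^-$ and $x^+$ are well-formed; (3A) $x\lhd y$ and $y\lhd x$ imply $x=y$; (3B) if $x\lhd y$ then there is no $z$ with $x\in z^+$ and $y\in z^-$, and no $z$ with $y\in z^+$ and $x\in z^-$. A set $R\subseteq C$ is tight when for all $u,v\in C$, if $u\lhd v$ and $v\in R$ then $u^-\cap R^\pm=\emptyset$. *)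

theory Defs
  imports Main
begin

text \<open>A parity complex: carrier C, dimension function dim, face maps mn (x^-) and pl (x^+).\<close>

definition setMinus :: "('a \<Rightarrow> 'a set) \<Rightarrow> 'a set \<Rightarrow> 'a set" where
  "setMinus mn S = (\<Union>w\<in>S. mn w)"

definition setPlus :: "('a \<Rightarrow> 'a set) \<Rightarrow> 'a set \<Rightarrow> 'a set" where
  "setPlus pl S = (\<Union>w\<in>S. pl w)"

definition setPM :: "('a \<Rightarrow> 'a set) \<Rightarrow> ('a \<Rightarrow> 'a set) \<Rightarrow> 'a set \<Rightarrow> 'a set" where
  "setPM mn pl S = setPlus pl S - setMinus mn S"

definition orth :: "('a \<Rightarrow> 'a set) \<Rightarrow> ('a \<Rightarrow> 'a set) \<Rightarrow> 'a set \<Rightarrow> 'a set \<Rightarrow> bool" where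
  "orth mn pl S T \<longleftrightarrow> setMinus mn S \<inter> setMinus mn T = {} \<and> setPlus pl S \<inter> setPlus pl T = {}"

definition well_formed :: "('a \<Rightarrow> nat) \<Rightarrow> ('a \<Rightarrow> 'a set) \<Rightarrow> ('a \<Rightarrow> 'a set) \<Rightarrow> 'a set \<Rightarrow> bool" where
  "well_formed dim mn pl S \<longleftrightarrow>
     (\<forall>x\<in>S. \<forall>y\<in>S. dim x = 0 \<longrightarrow> dim y = 0 \<longrightarrow> x = y) \<and>
     (\<forall>n>0. \<forall>x\<in>S. \<forall>y\<in>S. dim x = n \<longrightarrow> dim y = n \<longrightarrow> x \<noteq> y \<longrightarrow> orth mn pl {x} {y})"

definition prec :: "'a set \<Rightarrow> ('a \<Rightarrow> 'a set) \<Rightarrow> ('a \<Rightarrow> 'a set) \<Rightarrow> 'a \<Rightarrow> 'a \<Rightarrow> bool" where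
  "prec C mn pl x y \<longleftrightarrow> x \<in> C \<and> y \<in> C \<and> pl x \<inter> mn y \<noteq> {}"

definition tri :: "'a set \<Rightarrow> ('a \<Rightarrow> 'a set) \<Rightarrow> ('a \<Rightarrow> 'a set) \<Rightarrow> 'a \<Rightarrow> 'a \<Rightarrow> bool" where
  "tri C mn pl x y \<longleftrightarrow> (x \<in> C \<and> x = y) \<or> (prec C mn pl)\<^sup>+\<^sup>+ x y"

definition parity_complex :: "'a set \<Rightarrow> ('a \<Rightarrow> nat) \<Rightarrow> ('a \<Rightarrow> 'a set) \<Rightarrow> ('a \<Rightarrow> 'a set) \<Rightarrow> bool" where
  "parity_complex C dim mn pl \<longleftrightarrow>
     (\<forall>x\<in>C. dim x = 0 \<longrightarrow> mn x = {} \<and> pl x = {}) \<and>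
     (\<forall>x\<in>C. dim x > 0 \<longrightarrow>
        mn x \<subseteq> C \<and> pl x \<subseteq> C \<and>
        (\<forall>y\<in>mn x. dim y = dim x - 1) \<and> (\<forall>y\<in>pl x. dim y = dim x - 1) \<and>
        mn x \<inter> pl x = {} \<and> mn x \<noteq> {} \<and> pl x \<noteq> {} \<and> finite (mn x) \<and> finite (pl x)) \<and>
     \<comment> \<open>Axiom 1\<close>
     (\<forall>x\<in>C. setPlus pl (pl x) \<union> setMinus mn (mn x) = setPlus pl (mn x) \<union> setMinus mn (pl x)) \<and>
     \<comment> \<open>Axiom 2\<close>
     (\<forall>x\<in>C. well_formed dim mn pl (mn x) \<and> well_formed dim mn pl (pl x)) \<and>
     \<comment> \<open>Axiom 3A\<close>
     (\<forall>x y. tri C mn pl x y \<longrightarrow> tri C mn pl y x \<longrightarrow> x = y) \<and>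
     \<comment> \<open>Axiom 3B\<close>
     (\<forall>x y. tri C mn pl x y \<longrightarrow>
        \<not> (\<exists>z\<in>C. x \<in> pl z \<and> y \<in> mn z) \<and> \<not> (\<exists>z\<in>C. y \<in> pl z \<and> x \<in> mn z))"

definition tight :: "'a set \<Rightarrow> ('a \<Rightarrow> 'a set) \<Rightarrow> ('a \<Rightarrow> 'a set) \<Rightarrow> 'a set \<Rightarrow> bool" where
  "tight C mn pl R \<longleftrightarrow>
     (\<forall>u\<in>C. \<forall>v\<in>C. tri C mn pl u v \<longrightarrow> v \<in> R \<longrightarrow> mn u \<inter> setPM mn pl R = {})"

end

theory Submission
  imports Defs
begin

text \<open>If \<open>w \<in> u\<^sup>- \<inter> R\<^sup>\<plusminus>\<close> for \<open>R = x\<^sup>+\<close>, Axiom 1 puts \<open>w\<close> in \<open>y\<^sup>+\<close> for some \<open>y \<in> x\<^sup>-\<close>.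
  Then \<open>y < u \<lhd> v\<close> with \<open>v \<in> x\<^sup>+\<close>, i.e. \<open>y \<lhd> v\<close>, which Axiom 3B forbids since \<open>y \<in> x\<^sup>-\<close>
  and \<open>v \<in> x\<^sup>+\<close>. The case \<open>R = x\<^sup>-\<close> is symmetric.\<close>

lemma tri_prec_trans:
  assumes "prec C mn pl y u" "tri C mn pl u v"
  shows "tri C mn pl y v"
  using assms unfolding tri_def
  by (metis prec_def tranclp.r_into_trancl tranclp_into_tranclp2)

lemma tight_if_boundary_covered:
  assumes "S \<subseteq> C"
    and "setPM mn pl R \<subseteq> setPlus pl S"
    and "\<And>y v. y \<in> S \<Longrightarrow> v \<in> R \<Longrightarrow> \<not> tri C mn pl y v"
  shows "tight C mn pl R"
  unfolding tight_def
proof (intro ballI impI)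
  fix u v
  assume "u \<in> C" "v \<in> C" "tri C mn pl u v" "v \<in> R"
  show "mn u \<inter> setPM mn pl R = {}"
  proof (rule ccontr)
    assume "mn u \<inter> setPM mn pl R \<noteq> {}"
    then obtain w y where "w \<in> mn u" "y \<in> S" "w \<in> pl y"
      using assms(2) unfolding setPlus_def by blast
    then have "prec C mn pl y u"
      using \<open>u \<in> C\<close> assms(1) unfolding prec_def by blast
    then have "tri C mn pl y v"
      using \<open>tri C mn pl u v\<close> by (rule tri_prec_trans)
    then show False
      using assms(3) \<open>y \<in> S\<close> \<open>v \<in> R\<close> by blast
  qed
qed

lemma parity_complex_faces_subset:
  assumes "parity_complex C dim mn pl" "x \<in> C"
  shows "mn x \<subseteq> C" "pl x \<subseteq> C"
  using assms unfolding parity_complex_def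
  by (metis empty_subsetI neq0_conv)+

lemma parity_complex_boundary_of_faces:
  assumes "parity_complex C dim mn pl" "x \<in> C"
  shows "setPM mn pl (pl x) \<subseteq> setPlus pl (mn x)"
    and "setPM mn pl (mn x) \<subseteq> setPlus pl (pl x)"
proof -
  have "setPlus pl (pl x) \<union> setMinus mn (mn x) = setPlus pl (mn x) \<union> setMinus mn (pl x)"
    using assms unfolding parity_complex_def by blast
  then show "setPM mn pl (pl x) \<subseteq> setPlus pl (mn x)"
    and "setPM mn pl (mn x) \<subseteq> setPlus pl (pl x)"
    unfolding setPM_def by blast+
qed

lemma parity_complex_no_tri_between_faces:
  assumes "parity_complex C dim mn pl" "x \<in> C" "y \<in> mn x" "v \<in> pl x"
  shows "\<not> tri C mn pl y v" and "\<not> tri C mn pl v y"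
  using assms unfolding parity_complex_def by blast+

theorem mainTheorem5:
  assumes "parity_complex C dim mn pl"
    and "x \<in> C"
  shows "tight C mn pl (pl x) \<and> tight C mn pl (mn x)"
proof
  note faces = parity_complex_faces_subset[OF assms]
    and boundary = parity_complex_boundary_of_faces[OF assms]
    and unrelated = parity_complex_no_tri_between_faces[OF assms]
  show "tight C mn pl (pl x)"
    using faces(1) boundary(1) unrelated(1) by (rule tight_if_boundary_covered)
  show "tight C mn pl (mn x)"
    using faces(2) boundary(2) unrelated(2) by (rule tight_if_boundary_covered)
qed

end
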